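(* Let $(\Omega,\mathcal{F})$ be a measurable space, $\mathcal{P}$ a nonempty set of probability measures on it, $\hat{\mathbb{E}}[Z]=\sup_{P\in\mathcal{P}}E_P[Z]$, and let $X,Y$ be random variables with $\hat{\mathbb{E}}[X^2]+\hat{\mathbb{E}}[Y^2]<\infty$. Put $U=\frac{X+Y}{2}$ and $V=\frac{X-Y}{2}$. Then $$\max_{\beta\in\mathbb{R}}\min_{\alpha\in\mathbb{R}}\hat{\mathbb{E}}[(U-\alpha)^2-(V-\beta)^2]=\max_{\beta\in M_V}\min_{\alpha\in M_U}\hat{\mathbb{E}}[(U-\alpha)^2-(V-\beta)^2],$$ $$\min_{\alpha\in\mathbb{R}}\max_{\beta\in\mathbb{R}}\left(-\hat{\mathbb{E}}[-(U-\alpha)^2+(V-\beta)^2]\right)=\min_{\alpha\in M_U}\max_{\beta\in M_V}\left(-\hat{\mathbb{E}}[-(U-\alpha)^2+(V-\beta)^2]\right).$$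
   Context: For a random variable $W$ with $\hat{\mathbb{E}}[W^2]<\infty$: $\overline{\mu}_W=\hat{\mathbb{E}}[W]$, $\underline{\mu}_W=-\hat{\mathbb{E}}[-W]$, and $M_W=[\underline{\mu}_W,\overline{\mu}_W]$. *)

theory Defs
  imports "HOL-Probability.Probability"
begin

definition upper_exp :: "'a measure set \<Rightarrow> ('a \<Rightarrow> real) \<Rightarrow> real" where
  "upper_exp Ps Z = (SUP P\<in>Ps. (\<integral>\<omega>. Z \<omega> \<partial>P))"

definition mean_interval :: "'a measure set \<Rightarrow> ('a \<Rightarrow> real) \<Rightarrow> real set" where
  "mean_interval Ps W = {- upper_exp Ps (\<lambda>\<omega>. - W \<omega>) .. upper_exp Ps W}"

text \<open>v = max_{b in B} min_{a in A} f a b, with all the max/min attained.\<close>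
definition is_maxmin :: "real set \<Rightarrow> real set \<Rightarrow> (real \<Rightarrow> real \<Rightarrow> real) \<Rightarrow> real \<Rightarrow> bool" where
  "is_maxmin A B f v \<longleftrightarrow>
     (\<forall>b\<in>B. \<exists>a\<in>A. \<forall>a'\<in>A. f a b \<le> f a' b) \<and>
     (\<exists>b\<in>B. (INF a\<in>A. f a b) = v \<and> (\<forall>b'\<in>B. (INF a\<in>A. f a b') \<le> v))"

text \<open>v = min_{a in A} max_{b in B} f a b, with all the max/min attained.\<close>
definition is_minmax :: "real set \<Rightarrow> real set \<Rightarrow> (real \<Rightarrow> real \<Rightarrow> real) \<Rightarrow> real \<Rightarrow> bool" where
  "is_minmax A B f v \<longleftrightarrow>
     (\<forall>a\<in>A. \<exists>b\<in>B. \<forall>b'\<in>B. f a b' \<le> f a b) \<and>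
     (\<exists>a\<in>A. (SUP b\<in>B. f a b) = v \<and> (\<forall>a'\<in>A. v \<le> (SUP b\<in>B. f a' b)))"

end

theory Submission
  imports Defs
begin

(* For each P in Ps,
     E_P[(U - a)^2 - (V - b)^2] = Var_P U - Var_P V + (a - E_P U)^2 - (b - E_P V)^2,
   so the objective is a supremum of saddle quadratics whose centres (E_P U, E_P V) all lie
   in M_U x M_V. Projecting a onto M_U moves it closer to every centre and so cannot increase
   the objective; projecting b onto M_V cannot decrease it. Hence the inner minimum over the
   reals is attained in M_U and the outer maximum in M_V, attainment coming from the Lipschitz
   continuity of the objective on these compact intervals. The min-max identity is the max-min
   identity for the game with U and V exchanged. *)

lemma lipschitz_on_SUP:
  fixes f :: "'i \<Rightarrow> 'a::metric_space \<Rightarrow> real"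
  assumes "I \<noteq> {}"
    and bdd: "\<And>x. x \<in> S \<Longrightarrow> bdd_above ((\<lambda>i. f i x) ` I)"
    and lip: "\<And>i. i \<in> I \<Longrightarrow> L-lipschitz_on S (f i)"
  shows "L-lipschitz_on S (\<lambda>x. SUP i\<in>I. f i x)"
proof (rule lipschitz_onI)
  have le: "(SUP i\<in>I. f i x) \<le> (SUP i\<in>I. f i y) + L * dist x y" if "x \<in> S" "y \<in> S" for x y
  proof (rule cSUP_least[OF \<open>I \<noteq> {}\<close>])
    fix i assume i: "i \<in> I"
    have "f i x \<le> f i y + L * dist x y"
      using lipschitz_onD[OF lip[OF i] that] by (simp add: dist_real_def)
    also have "f i y \<le> (SUP i\<in>I. f i y)"
      using cSUP_upper[OF i bdd[OF \<open>y \<in> S\<close>]] .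
    finally show "f i x \<le> (SUP i\<in>I. f i y) + L * dist x y" by simp
  qed
  show "dist (SUP i\<in>I. f i x) (SUP i\<in>I. f i y) \<le> L * dist x y" if "x \<in> S" "y \<in> S" for x y
    using le[OF that] le[OF that(2,1)] by (simp add: dist_real_def dist_commute abs_le_iff)
  obtain i where "i \<in> I" using \<open>I \<noteq> {}\<close> by blast
  then show "0 \<le> L" using lip lipschitz_on_nonneg by blast
qed

lemma lipschitz_on_INF:
  fixes f :: "'i \<Rightarrow> 'a::metric_space \<Rightarrow> real"
  assumes "I \<noteq> {}"
    and "\<And>x. x \<in> S \<Longrightarrow> bdd_below ((\<lambda>i. f i x) ` I)"
    and "\<And>i. i \<in> I \<Longrightarrow> L-lipschitz_on S (f i)"
  shows "L-lipschitz_on S (\<lambda>x. INF i\<in>I. f i x)"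
proof -
  have "L-lipschitz_on S (\<lambda>x. SUP i\<in>I. - f i x)"
    using assms by (intro lipschitz_on_SUP) (auto simp: bdd_above_uminus_image)
  moreover have "(INF i\<in>I. f i x) = - (SUP i\<in>I. - f i x)" for x
    by (simp add: Inf_real_def image_image)
  ultimately show ?thesis by simp
qed

lemma clamp_power2_dist_le:
  fixes l h m x :: real
  assumes "m \<in> {l..h}"
  shows "(max l (min h x) - m)\<^sup>2 \<le> (x - m)\<^sup>2"
  using assms by (auto simp: abs_le_square_iff[symmetric])

lemma abs_power2_shift_diff_le:
  fixes l h m a a' :: real
  assumes "a \<in> {l..h}" "a' \<in> {l..h}" "m \<in> {l..h}"
  shows "\<bar>(a - m)\<^sup>2 - (a' - m)\<^sup>2\<bar> \<le> 2 * (h - l) * \<bar>a - a'\<bar>"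
proof -
  have "(a - m)\<^sup>2 - (a' - m)\<^sup>2 = (a - a') * (a + a' - 2 * m)"
    by (simp add: power2_eq_square algebra_simps)
  moreover have "\<bar>a + a' - 2 * m\<bar> \<le> 2 * (h - l)"
    using assms by auto
  ultimately show ?thesis
    by (simp add: abs_mult mult.commute mult_left_mono)
qed

lemma clamp_decreasing_attains_min:
  fixes g :: "real \<Rightarrow> real"
  assumes "l \<le> h" "continuous_on {l..h} g" "\<And>x. g (max l (min h x)) \<le> g x"
  shows "\<exists>a\<in>{l..h}. \<forall>x. g a \<le> g x"
proof -
  obtain a where a: "a \<in> {l..h}" "\<And>y. y \<in> {l..h} \<Longrightarrow> g a \<le> g y"
    using continuous_attains_inf[OF compact_Icc _ assms(2)] assms(1) by auto
  have "g a \<le> g x" for x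
    using a(2)[of "max l (min h x)"] assms(3)[of x] assms(1) by auto
  with a(1) show ?thesis by blast
qed

lemma maxmin_clamped_intervals:
  fixes f :: "real \<Rightarrow> real \<Rightarrow> real"
  assumes "la \<le> ha" "lb \<le> hb"
    and cont_a: "\<And>b. continuous_on {la..ha} (\<lambda>a. f a b)"
    and lip_b: "\<And>a. a \<in> {la..ha} \<Longrightarrow> L-lipschitz_on {lb..hb} (f a)"
    and clamp_a: "\<And>a b. f (max la (min ha a)) b \<le> f a b"
    and clamp_b: "\<And>a b. f a b \<le> f a (max lb (min hb b))"
  shows "\<exists>v. is_maxmin UNIV UNIV f v \<and> is_maxmin {la..ha} {lb..hb} f v"
proof -
  have "\<exists>a\<in>{la..ha}. \<forall>x. f a b \<le> f x b" for b
    using clamp_decreasing_attains_min[of la ha "\<lambda>a. f a b"] assms(1) cont_a clamp_a by blast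
  then obtain amin where amin: "\<And>b. amin b \<in> {la..ha}" "\<And>b x. f (amin b) b \<le> f x b"
    by metis
  define h where "h b = f (amin b) b" for b
  have INF_eq: "(INF a\<in>A. f a b) = h b" if "{la..ha} \<subseteq> A" for A b
  proof -
    have "amin b \<in> A" using amin(1) that by blast
    then show ?thesis unfolding h_def using amin(2) by (intro cInf_eq_minimum) auto
  qed
  have "L-lipschitz_on {lb..hb} (\<lambda>b. INF a\<in>{la..ha}. f a b)"
    using amin assms(1) by (intro lipschitz_on_INF lip_b) (auto intro!: bdd_belowI2[where m = "f (amin _) _"])
  then have "continuous_on {lb..hb} (\<lambda>b. - h b)"
    by (intro continuous_on_minus lipschitz_on_continuous_on) (simp add: INF_eq)
  moreover have "h b \<le> h (max lb (min hb b))" for b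
    unfolding h_def by (rule order_trans[OF amin(2) clamp_b])
  ultimately obtain b0 where b0: "b0 \<in> {lb..hb}" "\<And>b. h b \<le> h b0"
    using clamp_decreasing_attains_min[of lb hb "\<lambda>b. - h b"] assms(2) by auto
  show ?thesis
    unfolding is_maxmin_def INF_eq[OF subset_refl] INF_eq[OF subset_UNIV]
    using amin b0 by blast
qed

lemma maxmin_SUP_saddle_quadratics:
  fixes s m n :: "'i \<Rightarrow> real"
  assumes I: "I \<noteq> {}" and s: "bdd_above (s ` I)"
    and m: "bdd_below (m ` I)" "bdd_above (m ` I)"
    and n: "bdd_below (n ` I)" "bdd_above (n ` I)"
  defines "F \<equiv> \<lambda>a b. SUP i\<in>I. s i + (a - m i)\<^sup>2 - (b - n i)\<^sup>2"
  shows "\<exists>v. is_maxmin UNIV UNIV F v \<and>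
    is_maxmin {INF i\<in>I. m i .. SUP i\<in>I. m i} {INF i\<in>I. n i .. SUP i\<in>I. n i} F v"
proof -
  define la ha lb hb where "la = (INF i\<in>I. m i)" and "ha = (SUP i\<in>I. m i)"
    and "lb = (INF i\<in>I. n i)" and "hb = (SUP i\<in>I. n i)"
  define q where "q i a b = s i + (a - m i)\<^sup>2 - (b - n i)\<^sup>2" for i a b
  have F_q: "F a b = (SUP i\<in>I. q i a b)" for a b
    unfolding F_def q_def ..
  have mn: "m i \<in> {la..ha}" "n i \<in> {lb..hb}" if "i \<in> I" for i
    unfolding la_def ha_def lb_def hb_def
    using that m n by (auto intro: cINF_lower cSUP_upper)
  then have "la \<le> ha" "lb \<le> hb"
    using I by fastforce+
  obtain S where S: "\<And>i. i \<in> I \<Longrightarrow> s i \<le> S"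
    using s by (auto simp: bdd_above_def)
  have bdd: "bdd_above ((\<lambda>i. q i a b) ` I)" for a b
  proof (rule bdd_aboveI2)
    fix i assume i: "i \<in> I"
    have "\<bar>a - m i\<bar> \<le> \<bar>a - la\<bar> + (ha - la)"
      using mn(1)[OF i] by auto
    then have "(a - m i)\<^sup>2 \<le> (\<bar>a - la\<bar> + (ha - la))\<^sup>2"
      by (metis abs_ge_zero order_trans power2_abs power_mono)
    then show "q i a b \<le> S + (\<bar>a - la\<bar> + (ha - la))\<^sup>2"
      unfolding q_def using S[OF i] by (smt (verit) zero_le_power2)
  qed
  have lip_q_a: "(2 * (ha - la))-lipschitz_on {la..ha} (\<lambda>a. q i a b)" if "i \<in> I" for i b
    using abs_power2_shift_diff_le[OF _ _ mn(1)[OF that]] \<open>la \<le> ha\<close>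
    by (intro lipschitz_onI) (auto simp: q_def dist_real_def)
  have lip_q_b: "(2 * (hb - lb))-lipschitz_on {lb..hb} (q i a)" if "i \<in> I" for i a
    using abs_power2_shift_diff_le[OF _ _ mn(2)[OF that]] \<open>lb \<le> hb\<close>
    by (intro lipschitz_onI) (auto simp: q_def dist_real_def abs_minus_commute)
  have "\<exists>v. is_maxmin UNIV UNIV F v \<and> is_maxmin {la..ha} {lb..hb} F v"
  proof (rule maxmin_clamped_intervals[OF \<open>la \<le> ha\<close> \<open>lb \<le> hb\<close>])
    show "continuous_on {la..ha} (\<lambda>a. F a b)" for b
      unfolding F_q using I bdd lip_q_a
      by (intro lipschitz_on_continuous_on lipschitz_on_SUP) auto
    show "(2 * (hb - lb))-lipschitz_on {lb..hb} (F a)" for a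
      unfolding F_q using I bdd lip_q_b by (intro lipschitz_on_SUP) auto
    show "F (max la (min ha a)) b \<le> F a b" for a b
      unfolding F_q using clamp_power2_dist_le[OF mn(1)]
      by (intro cSUP_mono[OF I bdd]) (force simp: q_def)
    show "F a b \<le> F a (max lb (min hb b))" for a b
      unfolding F_q using clamp_power2_dist_le[OF mn(2)]
      by (intro cSUP_mono[OF I bdd]) (force simp: q_def)
  qed
  then show ?thesis
    unfolding la_def ha_def lb_def hb_def .
qed

lemma (in prob_space) integrable_power2_shift:
  fixes X :: "'a \<Rightarrow> real"
  assumes "integrable M X" "integrable M (\<lambda>x. (X x)\<^sup>2)"
  shows "integrable M (\<lambda>x. (X x - c)\<^sup>2)"
  using assms by (simp add: power2_diff)

lemma (in prob_space) expectation_power2_shift: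
  fixes X :: "'a \<Rightarrow> real"
  assumes "integrable M X" "integrable M (\<lambda>x. (X x)\<^sup>2)"
  shows "expectation (\<lambda>x. (X x - c)\<^sup>2) = variance X + (c - expectation X)\<^sup>2"
  using assms by (simp add: variance_eq power2_diff prob_space algebra_simps power2_eq_square)

lemma (in prob_space) variance_le_second_moment:
  fixes X :: "'a \<Rightarrow> real"
  assumes "integrable M X" "integrable M (\<lambda>x. (X x)\<^sup>2)"
  shows "variance X \<le> expectation (\<lambda>x. (X x)\<^sup>2)"
  using assms by (simp add: variance_eq)

lemma (in prob_space) power2_expectation_le_second_moment:
  fixes X :: "'a \<Rightarrow> real"
  assumes "integrable M X" "integrable M (\<lambda>x. (X x)\<^sup>2)"
  shows "(expectation X)\<^sup>2 \<le> expectation (\<lambda>x. (X x)\<^sup>2)"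
  using variance_positive[of X] assms by (simp add: variance_eq)

lemma maxmin_upper_exp_saddle:
  fixes M :: "'a measure" and Ps :: "'a measure set" and U V :: "'a \<Rightarrow> real"
  assumes Ps_ne: "Ps \<noteq> {}"
    and Ps_prob: "\<And>P. P \<in> Ps \<Longrightarrow> prob_space P \<and> sets P = sets M"
    and U_meas: "U \<in> borel_measurable M" and V_meas: "V \<in> borel_measurable M"
    and U_sq: "\<And>P. P \<in> Ps \<Longrightarrow> integrable P (\<lambda>\<omega>. (U \<omega>)\<^sup>2)"
    and V_sq: "\<And>P. P \<in> Ps \<Longrightarrow> integrable P (\<lambda>\<omega>. (V \<omega>)\<^sup>2)"
    and U_fin: "bdd_above ((\<lambda>P. \<integral>\<omega>. (U \<omega>)\<^sup>2 \<partial>P) ` Ps)"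
    and V_fin: "bdd_above ((\<lambda>P. \<integral>\<omega>. (V \<omega>)\<^sup>2 \<partial>P) ` Ps)"
  shows "\<exists>v. is_maxmin UNIV UNIV
                 (\<lambda>\<alpha> \<beta>. upper_exp Ps (\<lambda>\<omega>. (U \<omega> - \<alpha>)\<^sup>2 - (V \<omega> - \<beta>)\<^sup>2)) v
           \<and> is_maxmin (mean_interval Ps U) (mean_interval Ps V)
                 (\<lambda>\<alpha> \<beta>. upper_exp Ps (\<lambda>\<omega>. (U \<omega> - \<alpha>)\<^sup>2 - (V \<omega> - \<beta>)\<^sup>2)) v"
proof -
  define m n where "m P = (\<integral>\<omega>. U \<omega> \<partial>P)" and "n P = (\<integral>\<omega>. V \<omega> \<partial>P)" for P
  define s where "s P = (\<integral>\<omega>. (U \<omega> - m P)\<^sup>2 \<partial>P) - (\<integral>\<omega>. (V \<omega> - n P)\<^sup>2 \<partial>P)" for P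
  have integrable: "integrable P U" "integrable P V" if P: "P \<in> Ps" for P
  proof -
    interpret prob_space P using Ps_prob[OF P] by blast
    have "measurable P borel = measurable M borel"
      using Ps_prob[OF P] by (intro measurable_cong_sets) auto
    then show "integrable P U" "integrable P V"
      using U_meas V_meas U_sq[OF P] V_sq[OF P] by (auto intro: square_integrable_imp_integrable)
  qed
  have upper_exp_eq: "upper_exp Ps (\<lambda>\<omega>. (U \<omega> - a)\<^sup>2 - (V \<omega> - b)\<^sup>2)
      = (SUP P\<in>Ps. s P + (a - m P)\<^sup>2 - (b - n P)\<^sup>2)" for a b
    unfolding upper_exp_def
  proof (rule SUP_cong[OF refl])
    fix P assume P: "P \<in> Ps"
    interpret prob_space P using Ps_prob[OF P] by blast
    have "(\<integral>\<omega>. (U \<omega> - a)\<^sup>2 - (V \<omega> - b)\<^sup>2 \<partial>P)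
        = (\<integral>\<omega>. (U \<omega> - a)\<^sup>2 \<partial>P) - (\<integral>\<omega>. (V \<omega> - b)\<^sup>2 \<partial>P)"
      using integrable[OF P] U_sq[OF P] V_sq[OF P]
      by (intro Bochner_Integration.integral_diff integrable_power2_shift)
    then show "(\<integral>\<omega>. (U \<omega> - a)\<^sup>2 - (V \<omega> - b)\<^sup>2 \<partial>P) = s P + (a - m P)\<^sup>2 - (b - n P)\<^sup>2"
      using expectation_power2_shift[OF integrable(1)[OF P] U_sq[OF P], of a]
        expectation_power2_shift[OF integrable(2)[OF P] V_sq[OF P], of b]
      unfolding s_def m_def n_def by linarith
  qed
  obtain CU CV where CU: "\<And>P. P \<in> Ps \<Longrightarrow> (\<integral>\<omega>. (U \<omega>)\<^sup>2 \<partial>P) \<le> CU"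
    and CV: "\<And>P. P \<in> Ps \<Longrightarrow> (\<integral>\<omega>. (V \<omega>)\<^sup>2 \<partial>P) \<le> CV"
    using U_fin V_fin by (auto simp: bdd_above_def)
  have bounds: "s P \<le> CU" "\<bar>m P\<bar> \<le> sqrt CU" "\<bar>n P\<bar> \<le> sqrt CV" if P: "P \<in> Ps" for P
  proof -
    interpret prob_space P using Ps_prob[OF P] by blast
    show "s P \<le> CU"
      using variance_le_second_moment[OF integrable(1)[OF P] U_sq[OF P]] variance_positive[of V]
        CU[OF P] unfolding s_def m_def n_def by linarith
    have "(m P)\<^sup>2 \<le> CU" "(n P)\<^sup>2 \<le> CV"
      using power2_expectation_le_second_moment[OF integrable(1)[OF P] U_sq[OF P]]
        power2_expectation_le_second_moment[OF integrable(2)[OF P] V_sq[OF P]] CU[OF P] CV[OF P]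
      unfolding m_def n_def by linarith+
    then show "\<bar>m P\<bar> \<le> sqrt CU" "\<bar>n P\<bar> \<le> sqrt CV"
      by (simp_all add: real_le_rsqrt)
  qed
  have mean_interval_eq: "mean_interval Ps U = {INF P\<in>Ps. m P .. SUP P\<in>Ps. m P}"
    "mean_interval Ps V = {INF P\<in>Ps. n P .. SUP P\<in>Ps. n P}"
    unfolding mean_interval_def upper_exp_def m_def n_def by (simp_all add: Inf_real_def image_image)
  have "bdd_above (s ` Ps)"
    using bounds(1) by (rule bdd_aboveI2)
  moreover have "bdd_below (m ` Ps)" "bdd_above (m ` Ps)"
    using bounds(2)
    by (intro bdd_belowI2[where m = "- sqrt CU"] bdd_aboveI2[where M = "sqrt CU"], force)+
  moreover have "bdd_below (n ` Ps)" "bdd_above (n ` Ps)"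
    using bounds(3)
    by (intro bdd_belowI2[where m = "- sqrt CV"] bdd_aboveI2[where M = "sqrt CV"], force)+
  ultimately show ?thesis
    unfolding upper_exp_eq mean_interval_eq by (rule maxmin_SUP_saddle_quadratics[OF Ps_ne])
qed

lemma power2_lincomb_le:
  fixes c d x y :: real
  shows "(c * x + d * y)\<^sup>2 \<le> 2 * c\<^sup>2 * x\<^sup>2 + 2 * d\<^sup>2 * y\<^sup>2"
proof -
  have "0 \<le> (c * x - d * y)\<^sup>2" by simp
  then show ?thesis by (simp add: power2_eq_square algebra_simps)
qed

lemma
  fixes X Y :: "'a \<Rightarrow> real"
  assumes "X \<in> borel_measurable M" "Y \<in> borel_measurable M"
    and "integrable M (\<lambda>\<omega>. (X \<omega>)\<^sup>2)" "integrable M (\<lambda>\<omega>. (Y \<omega>)\<^sup>2)"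
  shows integrable_power2_lincomb: "integrable M (\<lambda>\<omega>. (c * X \<omega> + d * Y \<omega>)\<^sup>2)"
    and integral_power2_lincomb_le: "(\<integral>\<omega>. (c * X \<omega> + d * Y \<omega>)\<^sup>2 \<partial>M)
      \<le> 2 * c\<^sup>2 * (\<integral>\<omega>. (X \<omega>)\<^sup>2 \<partial>M) + 2 * d\<^sup>2 * (\<integral>\<omega>. (Y \<omega>)\<^sup>2 \<partial>M)"
proof -
  have bound: "integrable M (\<lambda>\<omega>. 2 * c\<^sup>2 * (X \<omega>)\<^sup>2 + 2 * d\<^sup>2 * (Y \<omega>)\<^sup>2)"
    using assms by simp
  show int: "integrable M (\<lambda>\<omega>. (c * X \<omega> + d * Y \<omega>)\<^sup>2)"
    using assms power2_lincomb_le
    by (intro Bochner_Integration.integrable_bound[OF bound]) auto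
  have "(\<integral>\<omega>. (c * X \<omega> + d * Y \<omega>)\<^sup>2 \<partial>M)
      \<le> (\<integral>\<omega>. 2 * c\<^sup>2 * (X \<omega>)\<^sup>2 + 2 * d\<^sup>2 * (Y \<omega>)\<^sup>2 \<partial>M)"
    using int bound power2_lincomb_le by (rule integral_mono)
  also have "\<dots> = 2 * c\<^sup>2 * (\<integral>\<omega>. (X \<omega>)\<^sup>2 \<partial>M) + 2 * d\<^sup>2 * (\<integral>\<omega>. (Y \<omega>)\<^sup>2 \<partial>M)"
    using assms by simp
  finally show "(\<integral>\<omega>. (c * X \<omega> + d * Y \<omega>)\<^sup>2 \<partial>M)
      \<le> 2 * c\<^sup>2 * (\<integral>\<omega>. (X \<omega>)\<^sup>2 \<partial>M) + 2 * d\<^sup>2 * (\<integral>\<omega>. (Y \<omega>)\<^sup>2 \<partial>M)" .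
qed

lemma
  fixes M :: "'a measure" and Ps :: "'a measure set" and X Y :: "'a \<Rightarrow> real"
  assumes Ps_sets: "\<And>P. P \<in> Ps \<Longrightarrow> sets P = sets M"
    and X_meas: "X \<in> borel_measurable M" and Y_meas: "Y \<in> borel_measurable M"
    and X_sq: "\<And>P. P \<in> Ps \<Longrightarrow> integrable P (\<lambda>\<omega>. (X \<omega>)\<^sup>2)"
    and Y_sq: "\<And>P. P \<in> Ps \<Longrightarrow> integrable P (\<lambda>\<omega>. (Y \<omega>)\<^sup>2)"
    and X_fin: "bdd_above ((\<lambda>P. \<integral>\<omega>. (X \<omega>)\<^sup>2 \<partial>P) ` Ps)"
    and Y_fin: "bdd_above ((\<lambda>P. \<integral>\<omega>. (Y \<omega>)\<^sup>2 \<partial>P) ` Ps)"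
  shows integrable_power2_lincomb_family:
      "\<And>P. P \<in> Ps \<Longrightarrow> integrable P (\<lambda>\<omega>. (c * X \<omega> + d * Y \<omega>)\<^sup>2)"
    and bdd_above_second_moment_lincomb:
      "bdd_above ((\<lambda>P. \<integral>\<omega>. (c * X \<omega> + d * Y \<omega>)\<^sup>2 \<partial>P) ` Ps)"
proof -
  have meas: "X \<in> borel_measurable P" "Y \<in> borel_measurable P" if "P \<in> Ps" for P
    using X_meas Y_meas measurable_cong_sets[OF Ps_sets[OF that] refl] by auto
  show "integrable P (\<lambda>\<omega>. (c * X \<omega> + d * Y \<omega>)\<^sup>2)" if "P \<in> Ps" for P
    using meas[OF that] X_sq[OF that] Y_sq[OF that] by (rule integrable_power2_lincomb)
  obtain BX BY where BX: "\<And>P. P \<in> Ps \<Longrightarrow> (\<integral>\<omega>. (X \<omega>)\<^sup>2 \<partial>P) \<le> BX"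
    and BY: "\<And>P. P \<in> Ps \<Longrightarrow> (\<integral>\<omega>. (Y \<omega>)\<^sup>2 \<partial>P) \<le> BY"
    using X_fin Y_fin by (auto simp: bdd_above_def)
  show "bdd_above ((\<lambda>P. \<integral>\<omega>. (c * X \<omega> + d * Y \<omega>)\<^sup>2 \<partial>P) ` Ps)"
  proof (rule bdd_aboveI2)
    fix P assume P: "P \<in> Ps"
    have "(\<integral>\<omega>. (c * X \<omega> + d * Y \<omega>)\<^sup>2 \<partial>P)
        \<le> 2 * c\<^sup>2 * (\<integral>\<omega>. (X \<omega>)\<^sup>2 \<partial>P) + 2 * d\<^sup>2 * (\<integral>\<omega>. (Y \<omega>)\<^sup>2 \<partial>P)"
      using meas[OF P] X_sq[OF P] Y_sq[OF P] by (rule integral_power2_lincomb_le)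
    also have "\<dots> \<le> 2 * c\<^sup>2 * BX + 2 * d\<^sup>2 * BY"
      using BX[OF P] BY[OF P] by (intro add_mono mult_left_mono) auto
    finally show "(\<integral>\<omega>. (c * X \<omega> + d * Y \<omega>)\<^sup>2 \<partial>P) \<le> 2 * c\<^sup>2 * BX + 2 * d\<^sup>2 * BY" .
  qed
qed

lemma is_maxmin_imp_is_minmax:
  fixes f g :: "real \<Rightarrow> real \<Rightarrow> real"
  assumes "is_maxmin B A g v" "\<And>a b. f a b = - g b a"
  shows "is_minmax A B f (- v)"
proof -
  have "(SUP b\<in>B. f a b) = - (INF b\<in>B. g b a)" for a
    unfolding assms(2) Inf_real_def by (simp add: image_image)
  then show ?thesis
    using assms(1) unfolding is_minmax_def is_maxmin_def assms(2)
    by (metis neg_le_iff_le)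
qed

theorem lemma3p13:
  fixes M :: "'a measure" and Ps :: "'a measure set" and X Y :: "'a \<Rightarrow> real"
  assumes Ps_ne: "Ps \<noteq> {}"
    and Ps_prob: "\<And>P. P \<in> Ps \<Longrightarrow> prob_space P \<and> sets P = sets M"
    and X_meas: "X \<in> borel_measurable M" and Y_meas: "Y \<in> borel_measurable M"
    and X_sq: "\<And>P. P \<in> Ps \<Longrightarrow> integrable P (\<lambda>\<omega>. (X \<omega>)\<^sup>2)"
    and Y_sq: "\<And>P. P \<in> Ps \<Longrightarrow> integrable P (\<lambda>\<omega>. (Y \<omega>)\<^sup>2)"
    and X_fin: "bdd_above ((\<lambda>P. \<integral>\<omega>. (X \<omega>)\<^sup>2 \<partial>P) ` Ps)"
    and Y_fin: "bdd_above ((\<lambda>P. \<integral>\<omega>. (Y \<omega>)\<^sup>2 \<partial>P) ` Ps)"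
  defines "U \<equiv> (\<lambda>\<omega>. (X \<omega> + Y \<omega>) / 2)"
    and "V \<equiv> (\<lambda>\<omega>. (X \<omega> - Y \<omega>) / 2)"
  shows "(\<exists>v. is_maxmin UNIV UNIV
                 (\<lambda>\<alpha> \<beta>. upper_exp Ps (\<lambda>\<omega>. (U \<omega> - \<alpha>)\<^sup>2 - (V \<omega> - \<beta>)\<^sup>2)) v
           \<and> is_maxmin (mean_interval Ps U) (mean_interval Ps V)
                 (\<lambda>\<alpha> \<beta>. upper_exp Ps (\<lambda>\<omega>. (U \<omega> - \<alpha>)\<^sup>2 - (V \<omega> - \<beta>)\<^sup>2)) v)
         \<and> (\<exists>w. is_minmax UNIV UNIV
                 (\<lambda>\<alpha> \<beta>. - upper_exp Ps (\<lambda>\<omega>. - (U \<omega> - \<alpha>)\<^sup>2 + (V \<omega> - \<beta>)\<^sup>2)) w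
           \<and> is_minmax (mean_interval Ps U) (mean_interval Ps V)
                 (\<lambda>\<alpha> \<beta>. - upper_exp Ps (\<lambda>\<omega>. - (U \<omega> - \<alpha>)\<^sup>2 + (V \<omega> - \<beta>)\<^sup>2)) w)"
proof -
  have U_lin: "U = (\<lambda>\<omega>. 1/2 * X \<omega> + 1/2 * Y \<omega>)"
    and V_lin: "V = (\<lambda>\<omega>. 1/2 * X \<omega> + (- 1/2) * Y \<omega>)"
    unfolding U_def V_def by (auto simp: field_simps)
  have sets: "\<And>P. P \<in> Ps \<Longrightarrow> sets P = sets M"
    using Ps_prob by blast
  note lincomb = integrable_power2_lincomb_family[OF sets X_meas Y_meas X_sq Y_sq X_fin Y_fin]
    bdd_above_second_moment_lincomb[OF sets X_meas Y_meas X_sq Y_sq X_fin Y_fin]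
  have U_meas: "U \<in> borel_measurable M" and V_meas: "V \<in> borel_measurable M"
    unfolding U_def V_def using X_meas Y_meas by auto
  have U_sq: "\<And>P. P \<in> Ps \<Longrightarrow> integrable P (\<lambda>\<omega>. (U \<omega>)\<^sup>2)"
    and U_fin: "bdd_above ((\<lambda>P. \<integral>\<omega>. (U \<omega>)\<^sup>2 \<partial>P) ` Ps)"
    and V_sq: "\<And>P. P \<in> Ps \<Longrightarrow> integrable P (\<lambda>\<omega>. (V \<omega>)\<^sup>2)"
    and V_fin: "bdd_above ((\<lambda>P. \<integral>\<omega>. (V \<omega>)\<^sup>2 \<partial>P) ` Ps)"
    by (simp_all only: U_lin V_lin lincomb)
  note saddle = maxmin_upper_exp_saddle[OF Ps_ne, of M]
  obtain w where
    "is_maxmin UNIV UNIV (\<lambda>\<beta> \<alpha>. upper_exp Ps (\<lambda>\<omega>. (V \<omega> - \<beta>)\<^sup>2 - (U \<omega> - \<alpha>)\<^sup>2)) w"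
    "is_maxmin (mean_interval Ps V) (mean_interval Ps U)
       (\<lambda>\<beta> \<alpha>. upper_exp Ps (\<lambda>\<omega>. (V \<omega> - \<beta>)\<^sup>2 - (U \<omega> - \<alpha>)\<^sup>2)) w"
    using saddle[of V U] Ps_prob V_meas U_meas V_sq U_sq V_fin U_fin by blast
  then have "\<exists>w. is_minmax UNIV UNIV
                 (\<lambda>\<alpha> \<beta>. - upper_exp Ps (\<lambda>\<omega>. - (U \<omega> - \<alpha>)\<^sup>2 + (V \<omega> - \<beta>)\<^sup>2)) w
           \<and> is_minmax (mean_interval Ps U) (mean_interval Ps V)
                 (\<lambda>\<alpha> \<beta>. - upper_exp Ps (\<lambda>\<omega>. - (U \<omega> - \<alpha>)\<^sup>2 + (V \<omega> - \<beta>)\<^sup>2)) w"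
    by (intro exI conjI) (erule is_maxmin_imp_is_minmax; simp)+
  with saddle[of U V] Ps_prob U_meas V_meas U_sq V_sq U_fin V_fin show ?thesis
    by blast
qed

end
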